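(* Let $U\subset\mathbb{R}^n$ be a bounded domain with smooth boundary and let $(u_1,u_2)\in C(\overline U)^2$ be a viscosity solution of the system (S) in $U$. Then for every $x_0\in U$ and $i\in\{1,2\}$ the limit $S_i^+(x_0):=\lim_{r\to0^+}S_i^+(x_0,r)$ exists in $\mathbb{R}$.
   Context: For $\varphi\in C^2$ near $x$, set $\Delta_\infty\varphi(x)=|D\varphi(x)|^{-2}\sum_{k,l=1}^n\varphi_{x_k}\varphi_{x_l}\varphi_{x_kx_l}(x)$ when $D\varphi(x)\neq0$. Define $\Delta_\infty^+\varphi(x)=\Delta_\infty\varphi(x)$ if $D\varphi(x)\ne0$ and $\Delta_\infty^+\varphi(x)=\max\{D^2\varphi(x)v\cdot v: v\in\mathbb{S}^{n-1}\}$ if $D\varphi(x)=0$; define $\Delta_\infty^-\varphi(x)$ in the same way with $\min$ in place of $\max$. The system (S) on an open set $\Omega$ is: $-\Delta_\infty u_1+u_1-u_2=0$ and $-\Delta_\infty u_2+u_2-u_1=0$ in $\Omega$. A pair $(u_1,u_2)$ of upper semicontinuous functions on $\Omega$ is a viscosity subsolution of (S) in $\Omega$ if for each $i\in\{1,2\}$, $j=3-i$, and each $\varphi\in C^2(\Omega)$ such that $u_i-\varphi$ has a local maximum at $x_0\in\Omega$, one has $-\Delta_\infty^+\varphi(x_0)+u_i(x_0)-u_j(x_0)\le0$. A pair of lower semicontinuous functions on $\Omega$ is a viscosity supersolution if for each $i$, $j=3-i$, and each $\varphi\in C^2(\Omega)$ such that $u_i-\varphi$ has a local minimum at $x_0\in\Omega$,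 one has $-\Delta_\infty^-\varphi(x_0)+u_i(x_0)-u_j(x_0)\ge0$. A viscosity solution is a pair that is both a subsolution and a supersolution. For $x_0\in U$, $r>0$ with $\overline B(x_0,r)\subset U$: $S_i^+(x_0,r)=\frac{\max_{|y-x_0|=r}u_i(y)-u_i(x_0)}{r}$. *)

theory Defs
  imports "HOL-Analysis.Analysis"
begin

definition usc_on :: "'a::metric_space set \<Rightarrow> ('a \<Rightarrow> real) \<Rightarrow> bool" where
  "usc_on S u \<longleftrightarrow> (\<forall>x\<in>S. \<forall>c. u x < c \<longrightarrow> (\<exists>e>0. \<forall>y\<in>S. dist y x < e \<longrightarrow> u y < c))"

definition lsc_on :: "'a::metric_space set \<Rightarrow> ('a \<Rightarrow> real) \<Rightarrow> bool" where
  "lsc_on S u \<longleftrightarrow> (\<forall>x\<in>S. \<forall>c. c < u x \<longrightarrow> (\<exists>e>0. \<forall>y\<in>S. dist y x < e \<longrightarrow> c < u y))"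

definition C2_with :: "'a::euclidean_space set \<Rightarrow> ('a \<Rightarrow> real) \<Rightarrow> ('a \<Rightarrow> ('a \<Rightarrow>\<^sub>L real))
    \<Rightarrow> ('a \<Rightarrow> ('a \<Rightarrow>\<^sub>L ('a \<Rightarrow>\<^sub>L real))) \<Rightarrow> bool" where
  "C2_with Om phi Df D2 \<longleftrightarrow>
     (\<forall>x\<in>Om. (phi has_derivative blinfun_apply (Df x)) (at x)) \<and>
     (\<forall>x\<in>Om. (Df has_derivative blinfun_apply (D2 x)) (at x)) \<and>
     continuous_on Om D2"

definition grad_of :: "('a::euclidean_space \<Rightarrow>\<^sub>L real) \<Rightarrow> 'a" where
  "grad_of L = (\<Sum>b\<in>Basis. blinfun_apply L b *\<^sub>R b)"

definition hess_form :: "('a::euclidean_space \<Rightarrow>\<^sub>L ('a \<Rightarrow>\<^sub>L real)) \<Rightarrow> 'a \<Rightarrow> real" where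
  "hess_form H v = blinfun_apply (blinfun_apply H v) v"

definition inf_lap :: "('a::euclidean_space \<Rightarrow>\<^sub>L real) \<Rightarrow> ('a \<Rightarrow>\<^sub>L ('a \<Rightarrow>\<^sub>L real)) \<Rightarrow> real" where
  "inf_lap L H = hess_form H (grad_of L) / (norm (grad_of L))\<^sup>2"

definition inf_lap_plus :: "('a::euclidean_space \<Rightarrow>\<^sub>L real) \<Rightarrow> ('a \<Rightarrow>\<^sub>L ('a \<Rightarrow>\<^sub>L real)) \<Rightarrow> real" where
  "inf_lap_plus L H = (if grad_of L \<noteq> 0 then inf_lap L H
                       else Sup {hess_form H v | v. norm v = 1})"

definition inf_lap_minus :: "('a::euclidean_space \<Rightarrow>\<^sub>L real) \<Rightarrow> ('a \<Rightarrow>\<^sub>L ('a \<Rightarrow>\<^sub>L real)) \<Rightarrow> real" where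
  "inf_lap_minus L H = (if grad_of L \<noteq> 0 then inf_lap L H
                       else Inf {hess_form H v | v. norm v = 1})"

definition local_max_on :: "'a::metric_space set \<Rightarrow> ('a \<Rightarrow> real) \<Rightarrow> 'a \<Rightarrow> bool" where
  "local_max_on Om f x0 \<longleftrightarrow> (\<exists>e>0. \<forall>y\<in>Om. dist y x0 < e \<longrightarrow> f y \<le> f x0)"

definition local_min_on :: "'a::metric_space set \<Rightarrow> ('a \<Rightarrow> real) \<Rightarrow> 'a \<Rightarrow> bool" where
  "local_min_on Om f x0 \<longleftrightarrow> (\<exists>e>0. \<forall>y\<in>Om. dist y x0 < e \<longrightarrow> f x0 \<le> f y)"

definition visc_sub_comp :: "'a::euclidean_space set \<Rightarrow> ('a \<Rightarrow> real) \<Rightarrow> ('a \<Rightarrow> real) \<Rightarrow> bool" where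
  "visc_sub_comp Om ui uj \<longleftrightarrow>
     (\<forall>phi Df D2 x0. C2_with Om phi Df D2 \<longrightarrow> x0 \<in> Om \<longrightarrow> local_max_on Om (\<lambda>x. ui x - phi x) x0 \<longrightarrow>
        - inf_lap_plus (Df x0) (D2 x0) + ui x0 - uj x0 \<le> 0)"

definition visc_super_comp :: "'a::euclidean_space set \<Rightarrow> ('a \<Rightarrow> real) \<Rightarrow> ('a \<Rightarrow> real) \<Rightarrow> bool" where
  "visc_super_comp Om ui uj \<longleftrightarrow>
     (\<forall>phi Df D2 x0. C2_with Om phi Df D2 \<longrightarrow> x0 \<in> Om \<longrightarrow> local_min_on Om (\<lambda>x. ui x - phi x) x0 \<longrightarrow>
        - inf_lap_minus (Df x0) (D2 x0) + ui x0 - uj x0 \<ge> 0)"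

definition visc_subsol_S :: "'a::euclidean_space set \<Rightarrow> ('a \<Rightarrow> real) \<Rightarrow> ('a \<Rightarrow> real) \<Rightarrow> bool" where
  "visc_subsol_S Om u1 u2 \<longleftrightarrow> usc_on Om u1 \<and> usc_on Om u2 \<and>
     visc_sub_comp Om u1 u2 \<and> visc_sub_comp Om u2 u1"

definition visc_supersol_S :: "'a::euclidean_space set \<Rightarrow> ('a \<Rightarrow> real) \<Rightarrow> ('a \<Rightarrow> real) \<Rightarrow> bool" where
  "visc_supersol_S Om u1 u2 \<longleftrightarrow> lsc_on Om u1 \<and> lsc_on Om u2 \<and>
     visc_super_comp Om u1 u2 \<and> visc_super_comp Om u2 u1"

definition visc_sol_S :: "'a::euclidean_space set \<Rightarrow> ('a \<Rightarrow> real) \<Rightarrow> ('a \<Rightarrow> real) \<Rightarrow> bool" where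
  "visc_sol_S Om u1 u2 \<longleftrightarrow> visc_subsol_S Om u1 u2 \<and> visc_supersol_S Om u1 u2"

definition pderiv_dir :: "'a::euclidean_space \<Rightarrow> ('a \<Rightarrow> real) \<Rightarrow> ('a \<Rightarrow> real)" where
  "pderiv_dir b f = (\<lambda>x. frechet_derivative f (at x) b)"

definition iter_pderiv :: "'a::euclidean_space list \<Rightarrow> ('a \<Rightarrow> real) \<Rightarrow> ('a \<Rightarrow> real)" where
  "iter_pderiv bs f = foldr pderiv_dir bs f"

definition smooth_on :: "'a::euclidean_space set \<Rightarrow> ('a \<Rightarrow> real) \<Rightarrow> bool" where
  "smooth_on S f \<longleftrightarrow> (\<forall>bs\<in>lists Basis.
      (\<forall>x\<in>S. iter_pderiv bs f differentiable (at x)) \<and> continuous_on S (iter_pderiv bs f))"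

definition smooth_boundary :: "'a::euclidean_space set \<Rightarrow> bool" where
  "smooth_boundary U \<longleftrightarrow> (\<forall>p\<in>frontier U. \<exists>V rho. open V \<and> p \<in> V \<and> smooth_on V rho \<and>
      (\<forall>x\<in>V. frechet_derivative rho (at x) \<noteq> (\<lambda>_. 0)) \<and>
      U \<inter> V = {x\<in>V. rho x < 0})"

definition S_plus :: "('a::euclidean_space \<Rightarrow> real) \<Rightarrow> 'a \<Rightarrow> real \<Rightarrow> real" where
  "S_plus u x0 r = (Sup (u ` sphere x0 r) - u x0) / r"

end

theory Submission
  imports Defs
begin

text \<open>
  Only the subsolution inequality for \<open>u\<^sub>i\<close> is used, and only through the bound
  \<open>u\<^sub>j - u\<^sub>i \<le> N - 1\<close> (continuity on the compact \<open>closure U\<close>), i.e.\ \<open>-\<Delta>\<^sub>\<infinity> u\<^sub>i \<le> N - 1\<close>.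
  Testing \<open>u\<^sub>i\<close> against paraboloids shows that the maximum over the sphere of radius \<open>r\<close>
  is at least \<open>u\<^sub>i(x\<^sub>0) - N r\<^sup>2/2\<close>. Testing against smoothed cones
  \<open>a \<surd>(|x - x\<^sub>0|\<^sup>2 + \<epsilon>) - N |x - x\<^sub>0|\<^sup>2/2\<close>, whose infinity Laplacian is \<open>a\<epsilon>/(|x - x\<^sub>0|\<^sup>2 + \<epsilon>)\<^sup>3\<^sup>/\<^sup>2 - N\<close>,
  gives comparison from above with the cones \<open>u\<^sub>i(x\<^sub>0) + a |x - x\<^sub>0| - N |x - x\<^sub>0|\<^sup>2/2\<close>.
  With \<open>a = S\<^sub>i\<^sup>+(x\<^sub>0,r) + 3Nr\<close> this yields \<open>S\<^sub>i\<^sup>+(x\<^sub>0,s) \<le> S\<^sub>i\<^sup>+(x\<^sub>0,r) + 3Nr\<close> for \<open>s < r\<close>; a function that is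
  monotone up to \<open>O(r)\<close> and bounded below converges as \<open>r \<rightarrow> 0\<^sup>+\<close>.
\<close>

definition outer_form :: "'a::real_inner \<Rightarrow> 'a \<Rightarrow>\<^sub>L ('a \<Rightarrow>\<^sub>L real)" where
  "outer_form d = blinfun_scaleR_left (blinfun_inner_right d) o\<^sub>L blinfun_inner_right d"

definition inner_form :: "'a::real_inner \<Rightarrow>\<^sub>L ('a \<Rightarrow>\<^sub>L real)" where
  "inner_form = Blinfun blinfun_inner_right"

lemma outer_form_apply [simp]: "outer_form d h k = (d \<bullet> h) * (d \<bullet> k)"
  by (simp add: outer_form_def blinfun.bilinear_simps)

lemma inner_form_apply [simp]: "inner_form h k = h \<bullet> k"
  by (simp add: inner_form_def bounded_linear_Blinfun_apply bounded_linear_blinfun_inner_right)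

lemma continuous_on_outer_form [continuous_intros]:
  "continuous_on S f \<Longrightarrow> continuous_on S (\<lambda>x. outer_form (f x))"
  unfolding outer_form_def by (intro continuous_intros)

lemma has_derivative_dist_sq:
  fixes x0 :: "'a::real_inner"
  shows "((\<lambda>x. (dist x x0)\<^sup>2) has_derivative (\<lambda>h. 2 * ((x - x0) \<bullet> h))) (at x)"
proof -
  have "(\<lambda>x. (dist x x0)\<^sup>2) = (\<lambda>x. (x - x0) \<bullet> (x - x0))"
    by (simp add: dist_norm power2_norm_eq_inner)
  moreover have "((\<lambda>x. (x - x0) \<bullet> (x - x0)) has_derivative (\<lambda>h. 2 * ((x - x0) \<bullet> h))) (at x)"
    by (rule derivative_eq_intros refl | simp add: inner_commute)+
  ultimately show ?thesis by simp
qed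

lemma C2_with_radial:
  fixes x0 :: "'a::euclidean_space"
  assumes dG: "\<And>t. t \<ge> 0 \<Longrightarrow> (G has_real_derivative G' t) (at t)"
    and dG': "\<And>t. t \<ge> 0 \<Longrightarrow> (G' has_real_derivative G'' t) (at t)"
    and cG'': "\<And>t. t \<ge> 0 \<Longrightarrow> isCont G'' t"
  shows "C2_with Om (\<lambda>x. G ((dist x x0)\<^sup>2))
     (\<lambda>x. (2 * G' ((dist x x0)\<^sup>2)) *\<^sub>R blinfun_inner_right (x - x0))
     (\<lambda>x. (4 * G'' ((dist x x0)\<^sup>2)) *\<^sub>R outer_form (x - x0) + (2 * G' ((dist x x0)\<^sup>2)) *\<^sub>R inner_form)"
  unfolding C2_with_def
proof (intro conjI ballI)
  let ?q = "\<lambda>x::'a. (dist x x0)\<^sup>2"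
  fix x
  show "((\<lambda>x. G (?q x)) has_derivative
      blinfun_apply ((2 * G' (?q x)) *\<^sub>R blinfun_inner_right (x - x0))) (at x)"
    using DERIV_compose_FDERIV[OF dG[OF zero_le_power2] has_derivative_dist_sq[of x0 x]]
    by (simp add: scaleR_blinfun.rep_eq mult_ac)
  have "((\<lambda>x. (2 * G' (?q x)) *\<^sub>R blinfun_inner_right (x - x0)) has_derivative
      (\<lambda>h. (2 * G' (?q x)) *\<^sub>R blinfun_inner_right h
         + (2 * (2 * ((x - x0) \<bullet> h) * G'' (?q x))) *\<^sub>R blinfun_inner_right (x - x0))) (at x)"
    using DERIV_compose_FDERIV[OF dG'[OF zero_le_power2] has_derivative_dist_sq[of x0 x]]
    by (intro derivative_eq_intros) auto
  moreover have "blinfun_apply ((4 * G'' (?q x)) *\<^sub>R outer_form (x - x0) + (2 * G' (?q x)) *\<^sub>R inner_form)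
      = (\<lambda>h. (2 * G' (?q x)) *\<^sub>R blinfun_inner_right h
         + (2 * (2 * ((x - x0) \<bullet> h) * G'' (?q x))) *\<^sub>R blinfun_inner_right (x - x0))"
    by (intro ext blinfun_eqI) (simp add: blinfun.bilinear_simps algebra_simps)
  ultimately show "((\<lambda>x. (2 * G' (?q x)) *\<^sub>R blinfun_inner_right (x - x0)) has_derivative
      blinfun_apply ((4 * G'' (?q x)) *\<^sub>R outer_form (x - x0) + (2 * G' (?q x)) *\<^sub>R inner_form)) (at x)"
    by simp
next
  have "isCont (\<lambda>x. G'' ((dist x x0)\<^sup>2)) x" for x :: 'a
    by (rule isCont_o2[where f="\<lambda>x. (dist x x0)\<^sup>2", OF _ cG''[OF zero_le_power2]])
      (intro continuous_intros)
  moreover have "isCont (\<lambda>x. G' ((dist x x0)\<^sup>2)) x" for x :: 'a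
    by (rule isCont_o2[where f="\<lambda>x. (dist x x0)\<^sup>2", OF _ DERIV_isCont[OF dG'[OF zero_le_power2]]])
      (intro continuous_intros)
  ultimately show "continuous_on Om (\<lambda>x. (4 * G'' ((dist x x0)\<^sup>2)) *\<^sub>R outer_form (x - x0)
      + (2 * G' ((dist x x0)\<^sup>2)) *\<^sub>R inner_form)"
    by (intro continuous_at_imp_continuous_on ballI continuous_intros)
      (auto simp: continuous_on_eq_continuous_at)
qed

lemma grad_of_scaled_inner_right: "grad_of (c *\<^sub>R blinfun_inner_right (d::'a::euclidean_space)) = c *\<^sub>R d"
  unfolding grad_of_def
  by (simp add: blinfun.bilinear_simps euclidean_representation flip: scaleR_scaleR scaleR_sum_right)

lemma inf_lap_plus_radial:
  fixes d :: "'a::euclidean_space"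
  assumes "g' \<noteq> 0 \<or> d = 0"
  shows "inf_lap_plus ((2 * g') *\<^sub>R blinfun_inner_right d) ((4 * g'') *\<^sub>R outer_form d + (2 * g') *\<^sub>R inner_form)
    = 4 * g'' * (d \<bullet> d) + 2 * g'"
proof (cases "d = 0")
  case True
  obtain b :: 'a where "b \<in> Basis" using nonempty_Basis by blast
  then have "{hess_form ((4 * g'') *\<^sub>R outer_form d + (2 * g') *\<^sub>R inner_form) v |v::'a. norm v = 1} = {2 * g'}"
    using True by (auto simp: hess_form_def blinfun.bilinear_simps dot_square_norm intro!: exI[of _ b])
  then show ?thesis
    using True by (simp add: inf_lap_plus_def grad_of_scaled_inner_right)
next
  case False
  with assms have "g' \<noteq> 0" by simp
  with False show ?thesis
    by (simp add: inf_lap_plus_def inf_lap_def grad_of_scaled_inner_right hess_form_def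
        blinfun.bilinear_simps dot_square_norm field_simps power2_eq_square)
qed

lemma visc_sub_comp_radial_test:
  fixes x0 :: "'a::euclidean_space"
  assumes sub: "visc_sub_comp U u v"
    and dG: "\<And>t. t \<ge> 0 \<Longrightarrow> (G has_real_derivative G' t) (at t)"
    and dG': "\<And>t. t \<ge> 0 \<Longrightarrow> (G' has_real_derivative G'' t) (at t)"
    and cG'': "\<And>t. t \<ge> 0 \<Longrightarrow> isCont G'' t"
    and "y \<in> U" and max: "local_max_on U (\<lambda>x. u x - G ((dist x x0)\<^sup>2)) y"
    and nondegenerate: "G' ((dist y x0)\<^sup>2) \<noteq> 0 \<or> y = x0"
  shows "u y - v y \<le> 4 * G'' ((dist y x0)\<^sup>2) * (dist y x0)\<^sup>2 + 2 * G' ((dist y x0)\<^sup>2)"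
proof -
  let ?t = "(dist y x0)\<^sup>2"
  have "- inf_lap_plus ((2 * G' ?t) *\<^sub>R blinfun_inner_right (y - x0))
      ((4 * G'' ?t) *\<^sub>R outer_form (y - x0) + (2 * G' ?t) *\<^sub>R inner_form) + u y - v y \<le> 0"
    using sub C2_with_radial[OF dG dG' cG'', of U x0] \<open>y \<in> U\<close> max unfolding visc_sub_comp_def by blast
  moreover have "G' ?t \<noteq> 0 \<or> y - x0 = 0"
    using nondegenerate by simp
  moreover have "(y - x0) \<bullet> (y - x0) = ?t"
    by (simp add: dist_norm power2_norm_eq_inner)
  ultimately show ?thesis
    using inf_lap_plus_radial[of "G' ?t" "y - x0" "G'' ?t"] by simp
qed

lemma local_max_on_if_max_on_cball:
  assumes "y \<in> ball x0 r" and "\<forall>z\<in>cball x0 r. f z \<le> f y"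
  shows "local_max_on U f y"
  unfolding local_max_on_def
proof (intro exI[of _ "r - dist x0 y"] conjI ballI impI)
  show "r - dist x0 y > 0" using assms(1) by simp
  fix z assume "dist z y < r - dist x0 y"
  then have "z \<in> cball x0 r"
    using dist_triangle[of x0 z y] by (simp add: dist_commute)
  then show "f z \<le> f y" using assms(2) by blast
qed

lemma le_Sup_sphere:
  fixes u :: "'a::euclidean_space \<Rightarrow> real"
  assumes "continuous_on (sphere x0 r) u" and "x \<in> sphere x0 r"
  shows "u x \<le> Sup (u ` sphere x0 r)"
  using assms by (intro cSup_upper imageI bounded_imp_bdd_above compact_imp_bounded
      compact_continuous_image compact_sphere)

lemma Sup_sphere_le:
  fixes u :: "'a::euclidean_space \<Rightarrow> real"
  assumes "0 \<le> r" and "\<And>x. x \<in> sphere x0 r \<Longrightarrow> u x \<le> B"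
  shows "Sup (u ` sphere x0 r) \<le> B"
  using assms by (intro cSup_least) auto

lemma Sup_sphere_lower_bound:
  fixes u v :: "'a::euclidean_space \<Rightarrow> real"
  assumes sub: "visc_sub_comp U u v" and bound: "\<And>y. y \<in> U \<Longrightarrow> v y - u y < N" and "0 < N"
    and "0 < r" and "cball x0 r \<subseteq> U" and cont: "continuous_on (cball x0 r) u"
  shows "u x0 - N / 2 * r\<^sup>2 \<le> Sup (u ` sphere x0 r)"
proof (rule ccontr)
  assume "\<not> ?thesis"
  then have Sup_lt: "Sup (u ` sphere x0 r) < u x0 - N / 2 * r\<^sup>2" by simp
  define f where "f x = u x + N / 2 * (dist x x0)\<^sup>2" for x
  have "continuous_on (cball x0 r) f"
    unfolding f_def using cont by (intro continuous_intros) auto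
  then obtain y where y: "y \<in> cball x0 r" and ymax: "\<forall>z\<in>cball x0 r. f z \<le> f y"
    using continuous_attains_sup[OF compact_cball] \<open>0 < r\<close> by (metis centre_in_cball empty_iff less_imp_le)
  have "u x0 = f x0" by (simp add: f_def)
  also have "\<dots> \<le> f y" using ymax \<open>0 < r\<close> by simp
  finally have "u x0 \<le> f y" .
  moreover have "f y \<le> Sup (u ` sphere x0 r) + N / 2 * r\<^sup>2" if "y \<in> sphere x0 r"
    using le_Sup_sphere[OF continuous_on_subset[OF cont] that] that
    by (simp add: f_def dist_commute)
  ultimately have "y \<in> ball x0 r"
    using y Sup_lt by (fastforce simp: dist_commute)
  moreover have "y \<in> U"
    using \<open>y \<in> ball x0 r\<close> \<open>cball x0 r \<subseteq> U\<close> by force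
  moreover have "local_max_on U (\<lambda>x. u x - (- N / 2) * (dist x x0)\<^sup>2) y"
    using local_max_on_if_max_on_cball \<open>y \<in> ball x0 r\<close> ymax unfolding f_def by fastforce
  moreover have "((\<lambda>t. - N / 2 * t) has_real_derivative - N / 2) (at t)" for t
    by (auto intro!: derivative_eq_intros)
  ultimately have "u y - v y \<le> - N"
    using visc_sub_comp_radial_test[where G'="\<lambda>_. - N / 2", OF sub _ DERIV_const continuous_const]
      \<open>0 < N\<close> by force
  then show False
    using bound \<open>y \<in> U\<close> by force
qed

lemma smoothed_cone_test:
  fixes u v :: "'a::euclidean_space \<Rightarrow> real"
  assumes sub: "visc_sub_comp U u v" and bound: "\<And>y. y \<in> U \<Longrightarrow> v y - u y \<le> N - 1"
    and "0 < \<epsilon>" and "y \<in> U"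
    and slope: "N * sqrt ((dist y x0)\<^sup>2 + \<epsilon>) < a"
    and max: "local_max_on U (\<lambda>x. u x - (a * sqrt ((dist x x0)\<^sup>2 + \<epsilon>) - N / 2 * (dist x x0)\<^sup>2)) y"
  shows "((dist y x0)\<^sup>2 + \<epsilon>) * sqrt ((dist y x0)\<^sup>2 + \<epsilon>) \<le> a * \<epsilon>"
proof -
  define c where "c = - N / 2"
  define G where "G t = a * sqrt (t + \<epsilon>) + c * t" for t
  define G' where "G' t = a / (2 * sqrt (t + \<epsilon>)) + c" for t
  define G'' where "G'' t = - a / (4 * ((t + \<epsilon>) * sqrt (t + \<epsilon>)))" for t
  have "(G has_real_derivative G' t) (at t)" if "0 \<le> t" for t
    using add_nonneg_pos[OF that \<open>0 < \<epsilon>\<close>] unfolding G_def[abs_def] G'_def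
    by (auto intro!: derivative_eq_intros simp: field_simps)
  moreover have "(G' has_real_derivative G'' t) (at t)" if "0 \<le> t" for t
    using add_nonneg_pos[OF that \<open>0 < \<epsilon>\<close>] unfolding G'_def[abs_def] G''_def
    by (auto intro!: derivative_eq_intros simp: field_simps power2_eq_square)
  moreover have "isCont G'' t" if "0 \<le> t" for t
    unfolding G''_def[abs_def] using that \<open>0 < \<epsilon>\<close> by (auto intro!: continuous_intros)
  moreover have "local_max_on U (\<lambda>x. u x - G ((dist x x0)\<^sup>2)) y"
    using max by (simp add: G_def c_def)
  moreover define s where "s = (dist y x0)\<^sup>2 + \<epsilon>"
  moreover have "0 < sqrt s"
    using \<open>0 < \<epsilon>\<close> by (simp add: s_def add_nonneg_pos)
  moreover have "G' ((dist y x0)\<^sup>2) \<noteq> 0"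
    using slope \<open>0 < sqrt s\<close> by (simp add: G'_def c_def s_def field_simps)
  ultimately have "u y - v y \<le> 4 * G'' ((dist y x0)\<^sup>2) * (dist y x0)\<^sup>2 + 2 * G' ((dist y x0)\<^sup>2)"
    using visc_sub_comp_radial_test[OF sub, of G G' G'' y x0] \<open>y \<in> U\<close> by blast
  also have "\<dots> = - a * (s - \<epsilon>) / (s * sqrt s) + a / sqrt s - N"
    by (simp add: G'_def G''_def c_def s_def)
  also have "\<dots> = a * \<epsilon> / (s * sqrt s) - N"
    using \<open>0 < sqrt s\<close> by (simp add: field_simps)
  finally have "1 \<le> a * \<epsilon> / (s * sqrt s)"
    using bound[OF \<open>y \<in> U\<close>] by linarith
  then show ?thesis
    using \<open>0 < sqrt s\<close> by (simp add: s_def le_divide_eq mult_pos_pos)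
qed

lemma smoothed_cone_bounds:
  fixes a \<epsilon> \<rho> :: real
  assumes "0 \<le> a" and "0 \<le> \<epsilon>" and "0 \<le> \<rho>"
  shows "a * \<rho> \<le> a * sqrt (\<rho>\<^sup>2 + \<epsilon>)" and "a * sqrt (\<rho>\<^sup>2 + \<epsilon>) \<le> a * \<rho> + a * sqrt \<epsilon>"
proof -
  show "a * \<rho> \<le> a * sqrt (\<rho>\<^sup>2 + \<epsilon>)"
    using assms by (intro mult_left_mono real_le_rsqrt) auto
  have "sqrt (\<rho>\<^sup>2 + \<epsilon>) \<le> \<rho> + sqrt \<epsilon>"
    using sqrt_add_le_add_sqrt[of "\<rho>\<^sup>2" \<epsilon>] assms by simp
  then show "a * sqrt (\<rho>\<^sup>2 + \<epsilon>) \<le> a * \<rho> + a * sqrt \<epsilon>"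
    using mult_left_mono[OF _ \<open>0 \<le> a\<close>] by (fastforce simp: distrib_left)
qed

lemma continuous_on_cball_centre_upper:
  fixes u :: "'a::metric_space \<Rightarrow> real"
  assumes cont: "continuous_on (cball x0 r) u" and "0 < r" and "0 < e"
  obtains \<delta> where "0 < \<delta>" and "\<delta> \<le> r"
    and "\<And>z. z \<in> cball x0 r \<Longrightarrow> dist z x0 < \<delta> \<Longrightarrow> u z < u x0 + e"
proof -
  have "x0 \<in> cball x0 r"
    using \<open>0 < r\<close> by simp
  then obtain d where "0 < d" and d: "\<forall>z\<in>cball x0 r. dist z x0 < d \<longrightarrow> dist (u z) (u x0) < e"
    using cont \<open>0 < e\<close> unfolding continuous_on_iff by blast
  show thesis
  proof (rule that[of "min d r"])
    fix z assume "z \<in> cball x0 r" and "dist z x0 < min d r"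
    then have "dist (u z) (u x0) < e"
      using d by simp
    then show "u z < u x0 + e"
      unfolding dist_real_def by linarith
  qed (use \<open>0 < d\<close> \<open>0 < r\<close> in auto)
qed

lemma power3_le_mult_sqrt:
  fixes \<delta> s :: real
  assumes "0 \<le> \<delta>" and "\<delta>\<^sup>2 \<le> s"
  shows "\<delta> ^ 3 \<le> s * sqrt s"
proof -
  have "\<delta> \<le> sqrt s"
    using assms by (intro real_le_rsqrt)
  with \<open>\<delta>\<^sup>2 \<le> s\<close> have "\<delta>\<^sup>2 * \<delta> \<le> s * sqrt s"
    by (rule mult_mono) (use assms order_trans[OF zero_le_power2[of \<delta>]] in auto)
  then show ?thesis
    by (simp add: power3_eq_cube power2_eq_square)
qed

lemma smoothing_parameter:
  fixes a \<theta> \<delta> r :: real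
  assumes "0 < a" and "0 < \<theta>" and "0 < \<delta>" and "0 < r"
  obtains \<epsilon> where "0 < \<epsilon>" and "\<epsilon> \<le> r\<^sup>2" and "a * sqrt \<epsilon> \<le> \<theta> / 4" and "a * \<epsilon> < \<delta> ^ 3"
proof
  define \<epsilon> where "\<epsilon> = min (r\<^sup>2) (min ((\<theta> / (4 * a))\<^sup>2) (\<delta> ^ 3 / (2 * a)))"
  show "0 < \<epsilon>" "\<epsilon> \<le> r\<^sup>2"
    using assms by (simp_all add: \<epsilon>_def)
  have "sqrt \<epsilon> \<le> \<theta> / (4 * a)"
    using assms by (intro real_le_lsqrt) (simp_all add: \<epsilon>_def)
  then show "a * sqrt \<epsilon> \<le> \<theta> / 4"
    using \<open>0 < a\<close> by (simp add: field_simps)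
  have "\<epsilon> \<le> \<delta> ^ 3 / (2 * a)"
    by (simp add: \<epsilon>_def)
  then have "a * \<epsilon> \<le> \<delta> ^ 3 / 2"
    using \<open>0 < a\<close> by (simp add: field_simps)
  also have "\<dots> < \<delta> ^ 3"
    using \<open>0 < \<delta>\<close> by simp
  finally show "a * \<epsilon> < \<delta> ^ 3" .
qed

lemma smoothed_cone_interior_max:
  fixes u v :: "'a::euclidean_space \<Rightarrow> real"
  assumes sub: "visc_sub_comp U u v" and bound: "\<And>y. y \<in> U \<Longrightarrow> v y - u y \<le> N - 1"
    and "0 \<le> N" and "0 < \<epsilon>" and "\<epsilon> \<le> r\<^sup>2" and slope: "2 * N * r < a"
    and "cball x0 r \<subseteq> U" and "y \<in> ball x0 r"
    and max: "\<forall>z\<in>cball x0 r. u z - (a * sqrt ((dist z x0)\<^sup>2 + \<epsilon>) - N / 2 * (dist z x0)\<^sup>2)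
      \<le> u y - (a * sqrt ((dist y x0)\<^sup>2 + \<epsilon>) - N / 2 * (dist y x0)\<^sup>2)"
  shows "((dist y x0)\<^sup>2 + \<epsilon>) * sqrt ((dist y x0)\<^sup>2 + \<epsilon>) \<le> a * \<epsilon>"
proof -
  have "(dist y x0)\<^sup>2 \<le> r\<^sup>2"
    using \<open>y \<in> ball x0 r\<close> by (intro power_mono) (auto simp: dist_commute)
  moreover have "(2 * r)\<^sup>2 = 4 * r\<^sup>2"
    by (simp add: power_mult_distrib)
  ultimately have "(dist y x0)\<^sup>2 + \<epsilon> \<le> (2 * r)\<^sup>2"
    using \<open>\<epsilon> \<le> r\<^sup>2\<close> zero_le_power2[of r] by linarith
  then have "sqrt ((dist y x0)\<^sup>2 + \<epsilon>) \<le> 2 * r"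
    using \<open>y \<in> ball x0 r\<close> by (intro real_le_lsqrt) (auto intro: order_trans[OF zero_le_dist] less_imp_le)
  then have "N * sqrt ((dist y x0)\<^sup>2 + \<epsilon>) < a"
    using slope \<open>0 \<le> N\<close> mult_left_mono[of _ "2 * r" N] by fastforce
  moreover have "y \<in> U"
    using \<open>y \<in> ball x0 r\<close> \<open>cball x0 r \<subseteq> U\<close> by auto
  ultimately show ?thesis
    using smoothed_cone_test[OF sub bound \<open>0 < \<epsilon>\<close>] local_max_on_if_max_on_cball[OF \<open>y \<in> ball x0 r\<close> max]
    by blast
qed

lemma cone_comparison:
  fixes u v :: "'a::euclidean_space \<Rightarrow> real"
  assumes sub: "visc_sub_comp U u v" and bound: "\<And>y. y \<in> U \<Longrightarrow> v y - u y \<le> N - 1"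
    and "0 \<le> N" and "0 < r" and "cball x0 r \<subseteq> U" and cont: "continuous_on (cball x0 r) u"
    and slope: "2 * N * r < a"
    and on_sphere: "\<And>x. x \<in> sphere x0 r \<Longrightarrow> u x \<le> u x0 + a * r - N / 2 * r\<^sup>2"
    and "x \<in> cball x0 r"
  shows "u x \<le> u x0 + a * dist x x0 - N / 2 * (dist x x0)\<^sup>2"
proof (rule ccontr)
  define W where "W z = u x0 + a * dist z x0 - N / 2 * (dist z x0)\<^sup>2" for z
  define \<theta> where "\<theta> = u x - W x"
  assume "\<not> ?thesis"
  then have "0 < \<theta>" by (simp add: \<theta>_def W_def)
  have "0 \<le> N * r" using \<open>0 \<le> N\<close> \<open>0 < r\<close> by simp
  then have "0 < a" using slope by linarith
  have W_ge: "u x0 \<le> W z" if "z \<in> cball x0 r" for z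
  proof -
    have "N / 2 * dist z x0 \<le> a"
      using that slope \<open>0 \<le> N * r\<close> mult_left_mono[OF _ \<open>0 \<le> N\<close>, of "dist z x0" r]
      by (simp add: dist_commute)
    then have "0 \<le> dist z x0 * (a - N / 2 * dist z x0)" by simp
    then show ?thesis
      by (simp add: W_def power2_eq_square algebra_simps)
  qed
  obtain \<delta> where "0 < \<delta>"
    and near: "\<And>z. z \<in> cball x0 r \<Longrightarrow> dist z x0 < \<delta> \<Longrightarrow> u z < u x0 + \<theta> / 2"
    using continuous_on_cball_centre_upper[OF cont \<open>0 < r\<close>, of "\<theta> / 2"] \<open>0 < \<theta>\<close> by auto
  text \<open>\<open>\<epsilon>\<close> keeps the smoothed cone within \<open>\<theta>/4\<close> of the cone, yet below the bound \<open>\<delta>\<^sup>3\<close>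
    that a maximum point at distance \<open>\<ge> \<delta>\<close> from \<open>x\<^sub>0\<close> must satisfy.\<close>
  obtain \<epsilon> where "0 < \<epsilon>" "\<epsilon> \<le> r\<^sup>2" "a * sqrt \<epsilon> \<le> \<theta> / 4" "a * \<epsilon> < \<delta> ^ 3"
    using smoothing_parameter \<open>0 < a\<close> \<open>0 < \<theta>\<close> \<open>0 < \<delta>\<close> \<open>0 < r\<close> by blast
  define f where "f z = u z - (a * sqrt ((dist z x0)\<^sup>2 + \<epsilon>) - N / 2 * (dist z x0)\<^sup>2)" for z
  have f_le: "f z \<le> u z - W z + u x0" and f_ge: "u z - W z + u x0 - \<theta> / 4 \<le> f z" for z
    using smoothed_cone_bounds[of a \<epsilon> "dist z x0"] \<open>0 < a\<close> \<open>0 < \<epsilon>\<close> \<open>a * sqrt \<epsilon> \<le> \<theta> / 4\<close>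
    by (auto simp: f_def W_def)
  have "continuous_on (cball x0 r) f"
    unfolding f_def using cont by (intro continuous_intros) auto
  then obtain y where y: "y \<in> cball x0 r" and ymax: "\<forall>z\<in>cball x0 r. f z \<le> f y"
    using continuous_attains_sup[OF compact_cball] \<open>0 < r\<close> by (metis centre_in_cball empty_iff less_imp_le)
  have "f x \<le> f y"
    using ymax \<open>x \<in> cball x0 r\<close> by blast
  then have "u x0 + 3 / 4 * \<theta> \<le> f y"
    using f_ge[of x] by (simp add: \<theta>_def field_simps)
  then have "y \<notin> sphere x0 r" and "\<delta> \<le> dist y x0"
    using f_le[of y] on_sphere[of y] near[OF y] W_ge[OF y] \<open>0 < \<theta>\<close>
    by (force simp: W_def dist_commute)+
  have "y \<in> ball x0 r"
    using y \<open>y \<notin> sphere x0 r\<close> by auto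
  then have "((dist y x0)\<^sup>2 + \<epsilon>) * sqrt ((dist y x0)\<^sup>2 + \<epsilon>) \<le> a * \<epsilon>"
    using smoothed_cone_interior_max[OF sub bound \<open>0 \<le> N\<close> \<open>0 < \<epsilon>\<close> \<open>\<epsilon> \<le> r\<^sup>2\<close> slope \<open>cball x0 r \<subseteq> U\<close>]
      ymax unfolding f_def by blast
  moreover have "\<delta>\<^sup>2 \<le> (dist y x0)\<^sup>2 + \<epsilon>"
    using power_mono[OF \<open>\<delta> \<le> dist y x0\<close>, of 2] \<open>0 < \<delta>\<close> \<open>0 < \<epsilon>\<close> by (simp del: power_mono_iff)
  ultimately show False
    using power3_le_mult_sqrt[of \<delta>] \<open>0 < \<delta>\<close> \<open>a * \<epsilon> < \<delta> ^ 3\<close> by fastforce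
qed

lemma quasi_monotone_has_limit_at_right_0:
  fixes g :: "real \<Rightarrow> real"
  assumes "0 < R"
    and quasi_mono: "\<And>s r. 0 < s \<Longrightarrow> s < r \<Longrightarrow> r \<le> R \<Longrightarrow> g s \<le> g r + K * r"
    and below: "\<And>s. 0 < s \<Longrightarrow> s \<le> R \<Longrightarrow> B \<le> g s"
  shows "\<exists>L. (g \<longlongrightarrow> L) (at_right 0)"
proof
  define K' where "K' = max K 1"
  have "0 < K'" by (simp add: K'_def)
  have quasi_mono': "g s \<le> g r + K' * r" if "0 < s" "s < r" "r \<le> R" for s r
  proof -
    have "K * r \<le> K' * r"
      using that by (intro mult_right_mono) (auto simp: K'_def)
    then show ?thesis
      using quasi_mono[OF that] by linarith
  qed
  define X where "X = (\<lambda>r. g r + K' * r) ` {0<..R}"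
  have "X \<noteq> {}" using \<open>0 < R\<close> by (auto simp: X_def)
  have "bdd_below X"
    unfolding X_def bdd_below_def using below \<open>0 < K'\<close>
    by (intro exI[of _ B]) (auto intro: add_increasing2)
  show "(g \<longlongrightarrow> Inf X) (at_right 0)"
    unfolding tendsto_iff eventually_at_right_field
  proof (intro allI impI)
    fix e :: real assume "0 < e"
    then obtain r where r: "r \<in> {0<..R}" and "g r + K' * r < Inf X + e"
      using cInf_lessD[OF \<open>X \<noteq> {}\<close>, of "Inf X + e"] unfolding X_def by auto
    have "dist (g s) (Inf X) < e" if "0 < s" "s < min r (e / K')" for s
    proof -
      have "g s < Inf X + e"
        using quasi_mono'[of s r] that r \<open>g r + K' * r < Inf X + e\<close> by auto
      moreover have "Inf X \<le> g s + K' * s"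
        using that r \<open>bdd_below X\<close> unfolding X_def by (intro cInf_lower) auto
      moreover have "K' * s < e"
        using that \<open>0 < K'\<close> by (simp add: less_divide_eq mult.commute)
      ultimately show ?thesis
        by (simp add: dist_real_def abs_less_iff)
    qed
    then show "\<exists>b>0. \<forall>s>0. s < b \<longrightarrow> dist (g s) (Inf X) < e"
      using r \<open>0 < e\<close> \<open>0 < K'\<close> by (intro exI[of _ "min r (e / K')"]) auto
  qed
qed

lemma S_plus_lower_bound:
  fixes u v :: "'a::euclidean_space \<Rightarrow> real"
  assumes "visc_sub_comp U u v" and "\<And>y. y \<in> U \<Longrightarrow> v y - u y < N" and "0 < N"
    and "0 < r" and "cball x0 r \<subseteq> U" and "continuous_on (cball x0 r) u"
  shows "- N / 2 * r \<le> S_plus u x0 r"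
  using Sup_sphere_lower_bound[OF assms] \<open>0 < r\<close>
  by (simp add: S_plus_def le_divide_eq power2_eq_square algebra_simps)

lemma S_plus_quasi_monotone:
  fixes u v :: "'a::euclidean_space \<Rightarrow> real"
  assumes sub: "visc_sub_comp U u v" and bound: "\<And>y. y \<in> U \<Longrightarrow> v y - u y \<le> N - 1" and "0 < N"
    and "cball x0 R \<subseteq> U" and cont: "continuous_on (cball x0 R) u"
    and "0 < s" and "s < r" and "r \<le> R"
  shows "S_plus u x0 s \<le> S_plus u x0 r + 3 * N * r"
proof -
  have "cball x0 r \<subseteq> U" and cont_r: "continuous_on (cball x0 r) u"
    using \<open>r \<le> R\<close> \<open>cball x0 R \<subseteq> U\<close> cont by (auto intro: continuous_on_subset)
  have "0 < r" using \<open>0 < s\<close> \<open>s < r\<close> by simp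
  define a where "a = S_plus u x0 r + 3 * N * r"
  have "- N / 2 * r \<le> S_plus u x0 r"
    using bound \<open>0 < N\<close> \<open>0 < s\<close> \<open>s < r\<close> \<open>cball x0 r \<subseteq> U\<close> cont_r
    by (intro S_plus_lower_bound[OF sub]) force+
  moreover have "0 < N * r"
    using \<open>0 < N\<close> \<open>0 < s\<close> \<open>s < r\<close> by simp
  ultimately have slope: "2 * N * r < a"
    by (simp add: a_def)
  have "u x \<le> u x0 + a * r - N / 2 * r\<^sup>2" if "x \<in> sphere x0 r" for x
  proof -
    have "u x \<le> Sup (u ` sphere x0 r)"
      using le_Sup_sphere[OF continuous_on_subset[OF cont_r] that] by auto
    also have "\<dots> = u x0 + a * r - 3 * N * r\<^sup>2"
      using \<open>0 < r\<close> by (simp add: a_def S_plus_def power2_eq_square field_simps)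
    also have "\<dots> \<le> u x0 + a * r - N / 2 * r\<^sup>2"
      using \<open>0 < N\<close> by simp
    finally show ?thesis .
  qed
  then have "u x \<le> u x0 + a * s - N / 2 * s\<^sup>2" if "x \<in> sphere x0 s" for x
    using cone_comparison[OF sub bound _ \<open>0 < r\<close> \<open>cball x0 r \<subseteq> U\<close> cont_r slope, of x] that
      \<open>0 < N\<close> \<open>s < r\<close> by (simp add: dist_commute)
  moreover have "0 \<le> N / 2 * s\<^sup>2"
    using \<open>0 < N\<close> by simp
  ultimately have "u x \<le> u x0 + a * s" if "x \<in> sphere x0 s" for x
    using that by fastforce
  then have "Sup (u ` sphere x0 s) \<le> u x0 + a * s"
    using \<open>0 < s\<close> by (intro Sup_sphere_le) auto
  then show ?thesis
    using \<open>0 < s\<close> by (simp add: S_plus_def a_def divide_le_eq algebra_simps)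
qed

lemma S_plus_has_limit:
  fixes U :: "'a::euclidean_space set" and u v :: "'a \<Rightarrow> real"
  assumes "open U" and "bounded U"
    and cu: "continuous_on (closure U) u" and cv: "continuous_on (closure U) v"
    and sub: "visc_sub_comp U u v" and "x0 \<in> U"
  shows "\<exists>L. ((\<lambda>r. S_plus u x0 r) \<longlongrightarrow> L) (at_right 0)"
proof -
  have "bounded ((\<lambda>y. v y - u y) ` closure U)"
    using \<open>bounded U\<close> cu cv
    by (intro compact_imp_bounded compact_continuous_image continuous_intros) (auto simp: compact_closure)
  then obtain M where M: "\<And>y. y \<in> closure U \<Longrightarrow> \<bar>v y - u y\<bar> \<le> M"
    unfolding bounded_iff by auto
  define N where "N = max M 0 + 1"
  have "0 < N" by (simp add: N_def)
  have bound: "v y - u y \<le> N - 1" if "y \<in> U" for y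
    using M[of y] that closure_subset by (force simp: N_def)
  obtain R where "0 < R" and "cball x0 R \<subseteq> U"
    using \<open>open U\<close> \<open>x0 \<in> U\<close> open_contains_cball by blast
  moreover have cont: "continuous_on (cball x0 R) u"
    using cu \<open>cball x0 R \<subseteq> U\<close> closure_subset by (blast intro: continuous_on_subset)
  moreover have "- N / 2 * R \<le> S_plus u x0 s" if "0 < s" "s \<le> R" for s
  proof -
    have "- N / 2 * R \<le> - N / 2 * s"
      using that \<open>0 < N\<close> by simp
    also have "\<dots> \<le> S_plus u x0 s"
      using that bound \<open>0 < N\<close> \<open>cball x0 R \<subseteq> U\<close> cont
      by (intro S_plus_lower_bound[OF sub, of N]) (force intro: continuous_on_subset)+
    finally show ?thesis .
  qed
  ultimately show ?thesis
    using S_plus_quasi_monotone[OF sub bound \<open>0 < N\<close>]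
    by (intro quasi_monotone_has_limit_at_right_0[where K="3 * N"]) auto
qed

theorem mainTheorem10:
  fixes U :: "'a::euclidean_space set" and u1 u2 :: "'a \<Rightarrow> real"
  assumes "open U" and "connected U" and "bounded U" and "smooth_boundary U"
    and "continuous_on (closure U) u1" and "continuous_on (closure U) u2"
    and "visc_sol_S U u1 u2"
    and "x0 \<in> U"
  shows "(\<exists>L::real. ((\<lambda>r. S_plus u1 x0 r) \<longlongrightarrow> L) (at_right 0)) \<and>
         (\<exists>L::real. ((\<lambda>r. S_plus u2 x0 r) \<longlongrightarrow> L) (at_right 0))"
proof -
  have "visc_sub_comp U u1 u2" and "visc_sub_comp U u2 u1"
    using \<open>visc_sol_S U u1 u2\<close> unfolding visc_sol_S_def visc_subsol_S_def by auto
  then show ?thesis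
    using S_plus_has_limit assms(1,3,5,6,8) by blast
qed

end
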